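(* Let $\sigma>0$, $n\ge1$, let $X_1,\dots,X_n$ be i.i.d. $N(0,1)$, $Y_j=e^{X_j/\sigma-1/(2\sigma^2)}$ and $\bar Y_n=\frac1n\sum_{j=1}^nY_j$. Define $\epsilon_n(h)$ for real $h$ by $$\mathbf P[\bar Y_n<h]=\Phi\Big((h-1)\sqrt{\tfrac{n}{e^{1/\sigma^2}-1}}\Big)+\epsilon_n(h).$$ Then for all $h$, $$|\epsilon_n(h)|\le \epsilon_{\mathrm{BE}}(n):=B\cdot\frac{\big(1-2\Phi(-\frac{5}{2\sigma})\big)e^{3/\sigma^2}-3\big(1-2\Phi(-\frac{3}{2\sigma})\big)e^{1/\sigma^2}+4\big(1-2\Phi(-\frac{1}{2\sigma})\big)}{\sqrt n\,(e^{1/\sigma^2}-1)^{3/2}},$$ and moreover $$\epsilon_{\mathrm{BE}}(n)\le B\sqrt{\tfrac{8}{\pi}}\,n^{-1/2}\Big(1+\frac{46.115+0.375\,e^{1/\sigma^2}+5.625\,e^{3/\sigma^2}}{\sigma^2}\Big)$$ and $$\epsilon_{\mathrm{BE}}(n)\le B\cdot\frac{e^{3/(2\sigma^2)}}{\sqrt n}\cdot\frac{1+4e^{-3/\sigma^2}}{(1-e^{-1/\sigma^2})^{3/2}}.$$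
   Context: $\Phi$ denotes the standard normal cumulative distribution function. $B$ denotes the universal Berry–Esseen constant for i.i.d. sums: a constant such that for every i.i.d. sequence $Z_1,Z_2,\dots$ with finite third moment, variance $s^2>0$ and $r^3=\mathbb E|Z_1-\mathbb EZ_1|^3$, the distribution function $F_n$ of $\sum_{j\le n}(Z_j-\mathbb EZ_j)/(s\sqrt n)$ satisfies $\sup_x|F_n(x)-\Phi(x)|\le B r^3/(\sqrt n s^3)$ (one may take $B=0.4748$). *)

theory Defs
  imports "HOL-Probability.Probability"
begin

definition Phi :: "real \<Rightarrow> real" where
  "Phi x = measure (density lborel std_normal_density) {..x}"

definition berry_esseen_const :: "real \<Rightarrow> bool" where
  "berry_esseen_const B \<longleftrightarrow>
    (\<forall>(\<mu>::real measure) (n::nat).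
       prob_space \<mu> \<and> sets \<mu> = sets borel \<and> integrable \<mu> (\<lambda>z. \<bar>z\<bar> ^ 3) \<and> 1 \<le> n \<and>
       (\<integral>z. (z - (\<integral>y. y \<partial>\<mu>))\<^sup>2 \<partial>\<mu>) > 0 \<longrightarrow>
       (let m = (\<integral>y. y \<partial>\<mu>);
            s = sqrt (\<integral>z. (z - m)\<^sup>2 \<partial>\<mu>);
            r3 = (\<integral>z. \<bar>z - m\<bar> ^ 3 \<partial>\<mu>);
            P = PiM {..<n} (\<lambda>_. \<mu>)
        in \<forall>x::real.
             \<bar>measure P {\<omega> \<in> space P. (\<Sum>j<n. \<omega> j - m) / (s * sqrt (real n)) \<le> x} - Phi x\<bar>
               \<le> B * r3 / (sqrt (real n) * s ^ 3)))"

definition eps_BE :: "real \<Rightarrow> real \<Rightarrow> nat \<Rightarrow> real" where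
  "eps_BE B \<sigma> n = B *
     ((1 - 2 * Phi (- 5 / (2 * \<sigma>))) * exp (3 / \<sigma>\<^sup>2)
      - 3 * (1 - 2 * Phi (- 3 / (2 * \<sigma>))) * exp (1 / \<sigma>\<^sup>2)
      + 4 * (1 - 2 * Phi (- 1 / (2 * \<sigma>))))
     / (sqrt (real n) * (exp (1 / \<sigma>\<^sup>2) - 1) powr (3 / 2))"

end

theory Submission
  imports Defs
begin

(* Y_j is log-normal with mean 1 and variance e^(1/sigma^2) - 1, so the first claim is the
   Berry-Esseen bound for the sample mean of the Y_j, once strict and non-strict events are
   exchanged using the continuity of Phi. The third absolute central moment of Y_j has a closed
   form: Y_j <= 1 exactly when X_j <= 1/(2 sigma), and a standard normal X has the truncated
   exponential moments E[e^(bX); X <= c] = e^(b^2/2) Phi(c - b).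
   The two upper bounds on eps_BE come from estimates of 1 - 2 Phi(-x) = P(|X| <= x): the crude
   bounds 0 <= 1 - 2 Phi(-x) <= 1 for the second, and for the first the Taylor bounds of
   e^(-y^2/2), which leave an inequality between exponential polynomials in 1/sigma^2 that is
   settled by differentiating twice. *)

section \<open>The standard normal distribution function\<close>

lemma Phi_eq_integral: "Phi x = (\<integral>y. indicator {..x} y * std_normal_density y \<partial>lborel)"
proof -
  have "Phi x = integral\<^sup>L (density lborel std_normal_density) (indicator {..x})"
    unfolding Phi_def by simp
  also have "\<dots> = (\<integral>y. std_normal_density y *\<^sub>R indicator {..x} y \<partial>lborel)"
    by (subst integral_density) auto
  finally show ?thesis by (simp add: mult.commute)
qed

lemma integrable_std_normal_density_indicator:
  "A \<in> sets borel \<Longrightarrow> integrable lborel (\<lambda>x. indicator A x * std_normal_density x)"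
  using integrable_mult_indicator[of A lborel std_normal_density] by simp

lemma Phi_eq_integral_lessThan: "Phi x = (\<integral>y. indicator {..<x} y * std_normal_density y \<partial>lborel)"
  unfolding Phi_eq_integral
proof (rule integral_cong_AE)
  show "AE y in lborel. indicator {..x} y * std_normal_density y = indicator {..<x} y * std_normal_density y"
    using AE_lborel_singleton[of x] by eventually_elim (auto simp: indicator_def)
qed simp_all

lemma integral_normal_density_atMost:
  "(\<integral>x. indicator {..c} x * normal_density b 1 x \<partial>lborel) = Phi (c - b)"
proof -
  have "(\<integral>x. indicator {..c} x * normal_density b 1 x \<partial>lborel)
      = (\<integral>x. indicator {..c} (b + 1 * x) * normal_density b 1 (b + 1 * x) \<partial>lborel)"
    using lborel_integral_real_affine[of 1 "\<lambda>x. indicator {..c} x * normal_density b 1 x" b] by simp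
  also have "\<dots> = (\<integral>x. indicator {..c - b} x * std_normal_density x \<partial>lborel)"
    by (rule Bochner_Integration.integral_cong) (auto simp: indicator_def normal_density_def)
  finally show ?thesis by (simp add: Phi_eq_integral)
qed

lemma Phi_minus: "Phi (- x) = 1 - Phi x"
proof -
  have "Phi (- x) = \<bar>-1\<bar> *\<^sub>R (\<integral>y. indicator {..-x} (0 + -1 * y) * std_normal_density (0 + -1 * y) \<partial>lborel)"
    unfolding Phi_eq_integral
    by (rule lborel_integral_real_affine[where f = "\<lambda>y. indicator {..-x} y * std_normal_density y"]) simp
  also have "\<dots> = (\<integral>y. indicator {x..} y * std_normal_density y \<partial>lborel)"
    by (simp add: indicator_def std_normal_density_def)
  finally have "Phi x + Phi (- x)
      = (\<integral>y. indicator {..<x} y * std_normal_density y + indicator {x..} y * std_normal_density y \<partial>lborel)"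
    unfolding Phi_eq_integral_lessThan[of x]
    by (simp add: integrable_std_normal_density_indicator)
  also have "\<dots> = 1"
    by (subst Bochner_Integration.integral_cong[OF refl, where g = std_normal_density])
       (auto simp: indicator_def)
  finally show ?thesis by simp
qed

lemma Phi_diff_eq_integral:
  "y \<le> x \<Longrightarrow> Phi x - Phi y = (\<integral>z. indicator {y<..x} z * std_normal_density z \<partial>lborel)"
  unfolding Phi_eq_integral
  by (subst Bochner_Integration.integral_diff[symmetric,
        OF integrable_std_normal_density_indicator integrable_std_normal_density_indicator])
     (auto intro!: Bochner_Integration.integral_cong simp: indicator_def)

lemma std_normal_density_le_one: "std_normal_density x \<le> 1"
proof -
  have "exp (- x\<^sup>2 / 2) \<le> 1" by simp
  also have "1 \<le> sqrt (2 * pi)" using pi_gt3 by (simp add: real_le_rsqrt)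
  finally show ?thesis by (simp add: std_normal_density_def field_simps)
qed

lemma Phi_mono: "y \<le> x \<Longrightarrow> Phi y \<le> Phi x"
proof -
  assume "y \<le> x"
  have "0 \<le> (\<integral>z. indicator {y<..x} z * std_normal_density z \<partial>lborel)"
    by (rule Bochner_Integration.integral_nonneg) simp
  with Phi_diff_eq_integral[OF \<open>y \<le> x\<close>] show ?thesis by linarith
qed

lemma Phi_diff_le: "y \<le> x \<Longrightarrow> Phi x - Phi y \<le> x - y"
proof -
  assume yx: "y \<le> x"
  have one: "has_bochner_integral lborel (\<lambda>z. 1 * indicator {y..x} z) (x - y)"
    using has_bochner_integral_FTC_Icc_real[OF yx, of "\<lambda>z. z" "\<lambda>_. 1"]
    by (auto intro!: derivative_eq_intros)
  have "Phi x - Phi y \<le> (\<integral>z. 1 * indicator {y..x} z \<partial>lborel)"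
    unfolding Phi_diff_eq_integral[OF yx]
  proof (rule integral_mono)
    show "integrable lborel (\<lambda>z. indicator {y<..x} z * std_normal_density z)"
      by (rule integrable_std_normal_density_indicator) simp
    show "integrable lborel (\<lambda>z. 1 * indicator {y..x} z :: real)"
      using one by (rule integrable.intros)
    show "indicator {y<..x} z * std_normal_density z \<le> 1 * indicator {y..x} z" for z :: real
      using std_normal_density_le_one[of z] by (simp add: indicator_def)
  qed
  with one show ?thesis by (simp add: has_bochner_integral_iff)
qed

lemma Phi_nonneg: "0 \<le> Phi x"
  unfolding Phi_eq_integral by (auto intro!: Bochner_Integration.integral_nonneg)

lemma Phi_minus_le_half: "0 \<le> x \<Longrightarrow> Phi (- x) \<le> 1 / 2"
  using Phi_minus[of x] Phi_mono[of "- x" x] by simp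

lemma std_normal_density_mult_exp:
  "std_normal_density x * exp (a + b * x) = exp (a + b\<^sup>2 / 2) * normal_density b 1 x"
proof -
  have "exp (- x\<^sup>2 / 2) * exp (a + b * x) = exp (a + b\<^sup>2 / 2) * exp (- (x - b)\<^sup>2 / 2)"
    unfolding exp_add[symmetric] by (rule arg_cong[where f = exp]) (simp add: power2_eq_square field_simps)
  then show ?thesis
    unfolding std_normal_density_def normal_density_def by simp
qed

lemma has_bochner_integral_std_normal_exp:
  "has_bochner_integral lborel (\<lambda>x. std_normal_density x * exp (a + b * x)) (exp (a + b\<^sup>2 / 2))"
proof -
  have "has_bochner_integral lborel (normal_density b 1) 1"
    by (simp add: has_bochner_integral_iff)
  from has_bochner_integral_mult_right[OF this, of "exp (a + b\<^sup>2 / 2)"]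
  show ?thesis by (simp add: std_normal_density_mult_exp)
qed

lemma has_bochner_integral_std_normal_exp_atMost:
  "has_bochner_integral lborel (\<lambda>x. indicator {..c} x * (std_normal_density x * exp (a + b * x)))
     (exp (a + b\<^sup>2 / 2) * Phi (c - b))"
proof -
  have "(\<lambda>x. indicator {..c} x * (std_normal_density x * exp (a + b * x)))
      = (\<lambda>x. exp (a + b\<^sup>2 / 2) * (indicator {..c} x * normal_density b 1 x))"
    by (simp add: fun_eq_iff std_normal_density_mult_exp)
  moreover have "integrable lborel (\<lambda>x. indicator {..c} x * normal_density b 1 x)"
    using integrable_mult_indicator[of "{..c}" lborel "normal_density b 1"] by simp
  ultimately show ?thesis
    by (simp add: has_bochner_integral_mult_right has_bochner_integral_iff integral_normal_density_atMost)
qed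

lemma std_normal_density_eq: "std_normal_density y = sqrt (2 / pi) / 2 * exp (- (y\<^sup>2 / 2))"
proof -
  have "sqrt (2 / pi) * sqrt (2 * pi) = 2"
    by (simp add: real_sqrt_mult[symmetric])
  then have "sqrt (2 / pi) / 2 = 1 / sqrt (2 * pi)"
    by (simp add: field_simps)
  then show ?thesis by (simp add: std_normal_density_def)
qed

lemma exp_minus_le_Taylor_quadratic: "0 \<le> u \<Longrightarrow> exp (- u) \<le> 1 - u + (u::real)\<^sup>2 / 2"
proof -
  assume "0 \<le> u"
  have "0 < ((u - 1)\<^sup>2 + 1) / 2"
    by (simp add: add_nonneg_pos)
  also have "\<dots> = 1 - u + u\<^sup>2 / 2"
    by (simp add: power2_eq_square field_simps)
  finally have pos: "0 < 1 - u + u\<^sup>2 / 2" .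
  have "1 \<le> 1 + u ^ 4 / 4"
    by simp
  also have "\<dots> = (1 - u + u\<^sup>2 / 2) * (1 + u + u\<^sup>2 / 2)"
    by (simp add: algebra_simps power2_eq_square power4_eq_xxxx)
  also have "\<dots> \<le> (1 - u + u\<^sup>2 / 2) * exp u"
    using exp_lower_Taylor_quadratic[OF \<open>0 \<le> u\<close>] pos by (intro mult_left_mono) auto
  finally show ?thesis by (simp add: exp_minus field_simps)
qed

lemma one_minus_two_Phi_minus_eq_integral:
  assumes "0 \<le> x"
  shows "1 - 2 * Phi (- x) = (\<integral>y. indicator {-x..x} y * std_normal_density y \<partial>lborel)"
proof -
  have "1 - 2 * Phi (- x) = Phi x - Phi (- x)"
    using Phi_minus[of x] by simp
  also have "\<dots> = (\<integral>y. indicator {..x} y * std_normal_density y - indicator {..<-x} y * std_normal_density y \<partial>lborel)"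
    unfolding Phi_eq_integral[of x] Phi_eq_integral_lessThan[of "- x"]
    by (simp add: integrable_std_normal_density_indicator)
  also have "\<dots> = (\<integral>y. indicator {-x..x} y * std_normal_density y \<partial>lborel)"
    using assms by (intro Bochner_Integration.integral_cong) (auto simp: indicator_def)
  finally show ?thesis .
qed

lemma one_minus_two_Phi_minus_ge:
  assumes "0 \<le> x"
  shows "sqrt (2 / pi) * (x - x ^ 3 / 6) \<le> 1 - 2 * Phi (- x)"
proof -
  define k where "k = sqrt (2 / pi) / 2"
  have "has_bochner_integral lborel (\<lambda>y. k * (1 - y\<^sup>2 / 2) * indicator {-x..x} y)
      ((\<lambda>y. k * (y - y ^ 3 / 6)) x - (\<lambda>y. k * (y - y ^ 3 / 6)) (- x))"
    using assms
    by (intro has_bochner_integral_FTC_Icc_real)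
       (auto intro!: derivative_eq_intros simp: algebra_simps power2_eq_square)
  then have poly: "has_bochner_integral lborel (\<lambda>y. k * (1 - y\<^sup>2 / 2) * indicator {-x..x} y)
      (sqrt (2 / pi) * (x - x ^ 3 / 6))"
    by (simp add: k_def algebra_simps)
  have "(\<integral>y. k * (1 - y\<^sup>2 / 2) * indicator {-x..x} y \<partial>lborel)
      \<le> (\<integral>y. indicator {-x..x} y * std_normal_density y \<partial>lborel)"
  proof (rule integral_mono)
    show "k * (1 - y\<^sup>2 / 2) * indicator {-x..x} y \<le> indicator {-x..x} y * std_normal_density y" for y
      using exp_ge_add_one_self[of "- (y\<^sup>2 / 2)"]
      by (simp add: std_normal_density_eq k_def indicator_def)
  qed (use poly in \<open>auto intro: integrable.intros integrable_std_normal_density_indicator\<close>)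
  with poly show ?thesis
    by (simp add: one_minus_two_Phi_minus_eq_integral[OF assms] has_bochner_integral_iff)
qed

lemma one_minus_two_Phi_minus_le:
  assumes "0 \<le> x"
  shows "1 - 2 * Phi (- x) \<le> sqrt (2 / pi) * (x - x ^ 3 / 6 + x ^ 5 / 40)"
proof -
  define k where "k = sqrt (2 / pi) / 2"
  have "has_bochner_integral lborel (\<lambda>y. k * (1 - y\<^sup>2 / 2 + y ^ 4 / 8) * indicator {-x..x} y)
      ((\<lambda>y. k * (y - y ^ 3 / 6 + y ^ 5 / 40)) x - (\<lambda>y. k * (y - y ^ 3 / 6 + y ^ 5 / 40)) (- x))"
    using assms
    by (intro has_bochner_integral_FTC_Icc_real)
       (auto intro!: derivative_eq_intros simp: algebra_simps power2_eq_square power4_eq_xxxx)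
  then have poly: "has_bochner_integral lborel (\<lambda>y. k * (1 - y\<^sup>2 / 2 + y ^ 4 / 8) * indicator {-x..x} y)
      (sqrt (2 / pi) * (x - x ^ 3 / 6 + x ^ 5 / 40))"
    by (simp add: k_def algebra_simps)
  have "(\<integral>y. indicator {-x..x} y * std_normal_density y \<partial>lborel)
      \<le> (\<integral>y. k * (1 - y\<^sup>2 / 2 + y ^ 4 / 8) * indicator {-x..x} y \<partial>lborel)"
  proof (rule integral_mono)
    have "exp (- (y\<^sup>2 / 2)) \<le> 1 - y\<^sup>2 / 2 + y ^ 4 / 8" for y :: real
      using exp_minus_le_Taylor_quadratic[of "y\<^sup>2 / 2"] by (simp add: power2_eq_square power4_eq_xxxx)
    then show "indicator {-x..x} y * std_normal_density y \<le> k * (1 - y\<^sup>2 / 2 + y ^ 4 / 8) * indicator {-x..x} y" for y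
      by (simp add: std_normal_density_eq k_def indicator_def)
  qed (use poly in \<open>auto intro: integrable.intros integrable_std_normal_density_indicator\<close>)
  with poly show ?thesis
    by (simp add: one_minus_two_Phi_minus_eq_integral[OF assms] has_bochner_integral_iff)
qed

section \<open>Moments of the log-normal distribution\<close>

definition lognormal_map :: "real \<Rightarrow> real \<Rightarrow> real" where
  "lognormal_map \<sigma> x = exp (x / \<sigma> - 1 / (2 * \<sigma>\<^sup>2))"

definition lognormal :: "real \<Rightarrow> real measure" where
  "lognormal \<sigma> = distr std_normal_distribution borel (lognormal_map \<sigma>)"

lemma lognormal_map_measurable [measurable]: "lognormal_map \<sigma> \<in> borel_measurable borel"
  unfolding lognormal_map_def by measurable

lemma integral_lognormal:
  "h \<in> borel_measurable borel \<Longrightarrow>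
    (\<integral>z. h z \<partial>lognormal \<sigma>) = (\<integral>x. std_normal_density x * h (lognormal_map \<sigma> x) \<partial>lborel)"
  by (simp add: lognormal_def integral_distr integral_density)

lemma integrable_lognormal_iff:
  "h \<in> borel_measurable borel \<Longrightarrow>
    integrable (lognormal \<sigma>) h \<longleftrightarrow> integrable lborel (\<lambda>x. std_normal_density x * h (lognormal_map \<sigma> x))"
  by (simp add: lognormal_def integrable_distr_eq integrable_density)

lemma distr_lognormal_map:
  assumes "distributed M lborel X std_normal_density"
  shows "distr M borel (lognormal_map \<sigma> \<circ> X) = lognormal \<sigma>"
proof -
  have X: "X \<in> borel_measurable M"
    using distributed_measurable[OF assms] by simp
  have "distr M borel X = distr M lborel X"
    by (rule distr_cong) auto
  also have "\<dots> = std_normal_distribution"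
    by (rule distributed_distr_eq_density[OF assms])
  finally have "distr M borel X = std_normal_distribution" .
  moreover have "distr M borel (lognormal_map \<sigma> \<circ> X) = distr (distr M borel X) borel (lognormal_map \<sigma>)"
    using X by (simp add: distr_distr)
  ultimately show ?thesis
    by (simp add: lognormal_def)
qed

lemma lognormal_map_power: "lognormal_map \<sigma> x ^ k = exp (- k / (2 * \<sigma>\<^sup>2) + (k / \<sigma>) * x)"
  unfolding lognormal_map_def exp_of_nat_mult[symmetric] by (simp add: algebra_simps)

lemma lognormal_exponent_eq:
  "- k / (2 * \<sigma>\<^sup>2) + (k / \<sigma>)\<^sup>2 / 2 = k * (k - 1) / (2 * \<sigma>\<^sup>2)" for k \<sigma> :: real
  by (cases "\<sigma> = 0") (simp_all add: power_divide field_simps power2_eq_square)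

lemma has_bochner_integral_lognormal_power:
  "has_bochner_integral lborel (\<lambda>x. std_normal_density x * lognormal_map \<sigma> x ^ k)
     (exp (real k * (real k - 1) / (2 * \<sigma>\<^sup>2)))"
  unfolding lognormal_map_power
  using has_bochner_integral_std_normal_exp[of "- real k / (2 * \<sigma>\<^sup>2)" "real k / \<sigma>", unfolded lognormal_exponent_eq] .

lemma has_bochner_integral_lognormal_power_atMost:
  "has_bochner_integral lborel (\<lambda>x. indicator {..c} x * (std_normal_density x * lognormal_map \<sigma> x ^ k))
     (exp (real k * (real k - 1) / (2 * \<sigma>\<^sup>2)) * Phi (c - k / \<sigma>))"
  unfolding lognormal_map_power
  using has_bochner_integral_std_normal_exp_atMost[of c "- real k / (2 * \<sigma>\<^sup>2)" "real k / \<sigma>", unfolded lognormal_exponent_eq] .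

lemma has_bochner_integral_lognormal_centered_square:
  "has_bochner_integral lborel (\<lambda>x. std_normal_density x * (lognormal_map \<sigma> x - 1)\<^sup>2)
     (exp (1 / \<sigma>\<^sup>2) - 1)"
proof -
  let ?m = "\<lambda>k x. std_normal_density x * lognormal_map \<sigma> x ^ k"
  have "(\<lambda>x. std_normal_density x * (lognormal_map \<sigma> x - 1)\<^sup>2) = (\<lambda>x. ?m 2 x - 2 * ?m 1 x + ?m 0 x)"
    by (simp add: fun_eq_iff power2_eq_square algebra_simps)
  moreover have "has_bochner_integral lborel (\<lambda>x. ?m 2 x - 2 * ?m 1 x + ?m 0 x) (exp (1 / \<sigma>\<^sup>2) - 2 * 1 + 1)"
    using has_bochner_integral_lognormal_power[of \<sigma> 2] has_bochner_integral_lognormal_power[of \<sigma> 1]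
      has_bochner_integral_lognormal_power[of \<sigma> 0]
    by (intro has_bochner_integral_add has_bochner_integral_diff has_bochner_integral_mult_right) simp_all
  ultimately show ?thesis by simp
qed

lemma centered_cube_expand: "(y - 1) ^ 3 = y ^ 3 - 3 * y ^ 2 + 3 * y ^ 1 - (y ^ 0 :: real)"
  by (simp add: power3_eq_cube power2_eq_square algebra_simps)

lemma has_bochner_integral_lognormal_centered_cube:
  "has_bochner_integral lborel (\<lambda>x. std_normal_density x * (lognormal_map \<sigma> x - 1) ^ 3)
     (exp (3 / \<sigma>\<^sup>2) - 3 * exp (1 / \<sigma>\<^sup>2) + 3 * 1 - 1)"
proof -
  let ?m = "\<lambda>k x. std_normal_density x * lognormal_map \<sigma> x ^ k"
  have "(\<lambda>x. std_normal_density x * (lognormal_map \<sigma> x - 1) ^ 3) = (\<lambda>x. ?m 3 x - 3 * ?m 2 x + 3 * ?m 1 x - ?m 0 x)"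
    by (simp add: fun_eq_iff centered_cube_expand algebra_simps)
  moreover have "has_bochner_integral lborel (\<lambda>x. ?m 3 x - 3 * ?m 2 x + 3 * ?m 1 x - ?m 0 x)
      (exp (3 / \<sigma>\<^sup>2) - 3 * exp (1 / \<sigma>\<^sup>2) + 3 * 1 - 1)"
    using has_bochner_integral_lognormal_power[of \<sigma> 3] has_bochner_integral_lognormal_power[of \<sigma> 2]
      has_bochner_integral_lognormal_power[of \<sigma> 1] has_bochner_integral_lognormal_power[of \<sigma> 0]
    by (intro has_bochner_integral_add has_bochner_integral_diff has_bochner_integral_mult_right) simp_all
  ultimately show ?thesis by simp
qed

lemma has_bochner_integral_lognormal_centered_cube_atMost:
  "has_bochner_integral lborel (\<lambda>x. indicator {..c} x * (std_normal_density x * (lognormal_map \<sigma> x - 1) ^ 3))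
     (exp (3 / \<sigma>\<^sup>2) * Phi (c - 3 / \<sigma>) - 3 * (exp (1 / \<sigma>\<^sup>2) * Phi (c - 2 / \<sigma>))
      + 3 * (1 * Phi (c - 1 / \<sigma>)) - 1 * Phi (c - 0 / \<sigma>))"
proof -
  let ?m = "\<lambda>k x. indicator {..c} x * (std_normal_density x * lognormal_map \<sigma> x ^ k)"
  have "(\<lambda>x. indicator {..c} x * (std_normal_density x * (lognormal_map \<sigma> x - 1) ^ 3))
      = (\<lambda>x. ?m 3 x - 3 * ?m 2 x + 3 * ?m 1 x - ?m 0 x)"
    by (simp add: fun_eq_iff centered_cube_expand algebra_simps)
  moreover have "has_bochner_integral lborel (\<lambda>x. ?m 3 x - 3 * ?m 2 x + 3 * ?m 1 x - ?m 0 x)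
      (exp (3 / \<sigma>\<^sup>2) * Phi (c - 3 / \<sigma>) - 3 * (exp (1 / \<sigma>\<^sup>2) * Phi (c - 2 / \<sigma>))
      + 3 * (1 * Phi (c - 1 / \<sigma>)) - 1 * Phi (c - 0 / \<sigma>))"
    using has_bochner_integral_lognormal_power_atMost[of c \<sigma> 3]
      has_bochner_integral_lognormal_power_atMost[of c \<sigma> 2]
      has_bochner_integral_lognormal_power_atMost[of c \<sigma> 1]
      has_bochner_integral_lognormal_power_atMost[of c \<sigma> 0]
    by (intro has_bochner_integral_add has_bochner_integral_diff has_bochner_integral_mult_right) simp_all
  ultimately show ?thesis by simp
qed

lemma lognormal_map_pos: "0 < lognormal_map \<sigma> x"
  by (simp add: lognormal_map_def)

lemma lognormal_map_le_one_iff: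
  assumes "\<sigma> > 0"
  shows "lognormal_map \<sigma> x \<le> 1 \<longleftrightarrow> x \<le> 1 / (2 * \<sigma>)"
proof -
  have "lognormal_map \<sigma> x \<le> 1 \<longleftrightarrow> x / \<sigma> - 1 / (2 * \<sigma>\<^sup>2) \<le> 0"
    by (simp add: lognormal_map_def)
  also have "\<dots> \<longleftrightarrow> x \<le> 1 / (2 * \<sigma>)"
    using assms by (simp add: field_simps power2_eq_square)
  finally show ?thesis .
qed

lemma abs_cube_eq: "\<bar>t\<bar> ^ 3 = t ^ 3 - 2 * (if t \<le> 0 then t ^ 3 else 0)" for t :: real
  by (cases "t \<le> 0") (simp_all add: abs_if power3_eq_cube)

(* The numerator of eps_BE; lognormal_abs_centered_cube identifies it as the third absolute
   central moment of lognormal sigma. *)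
definition lognormal_abs_moment3 :: "real \<Rightarrow> real" where
  "lognormal_abs_moment3 \<sigma> =
     (1 - 2 * Phi (- 5 / (2 * \<sigma>))) * exp (3 / \<sigma>\<^sup>2)
     - 3 * (1 - 2 * Phi (- 3 / (2 * \<sigma>))) * exp (1 / \<sigma>\<^sup>2)
     + 4 * (1 - 2 * Phi (- 1 / (2 * \<sigma>)))"

lemma has_bochner_integral_lognormal_abs_centered_cube:
  assumes "\<sigma> > 0"
  shows "has_bochner_integral lborel (\<lambda>x. std_normal_density x * \<bar>lognormal_map \<sigma> x - 1\<bar> ^ 3)
    (lognormal_abs_moment3 \<sigma>)"
proof -
  define c where "c = 1 / (2 * \<sigma>)"
  \<comment> \<open>Y <= 1 exactly when x <= c, so |Y - 1|^3 is (Y - 1)^3 minus twice its truncation at c.\<close>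
  have pw: "\<bar>lognormal_map \<sigma> x - 1\<bar> ^ 3 = (lognormal_map \<sigma> x - 1) ^ 3 - 2 * (indicator {..c} x * (lognormal_map \<sigma> x - 1) ^ 3)" for x
    by (simp add: abs_cube_eq lognormal_map_le_one_iff[OF assms] c_def indicator_def)
  have integrand: "(\<lambda>x. std_normal_density x * \<bar>lognormal_map \<sigma> x - 1\<bar> ^ 3)
      = (\<lambda>x. std_normal_density x * (lognormal_map \<sigma> x - 1) ^ 3
          - 2 * (indicator {..c} x * (std_normal_density x * (lognormal_map \<sigma> x - 1) ^ 3)))"
    unfolding pw by (simp add: fun_eq_iff algebra_simps)
  have "has_bochner_integral lborel
      (\<lambda>x. std_normal_density x * (lognormal_map \<sigma> x - 1) ^ 3
          - 2 * (indicator {..c} x * (std_normal_density x * (lognormal_map \<sigma> x - 1) ^ 3)))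
      ((exp (3 / \<sigma>\<^sup>2) - 3 * exp (1 / \<sigma>\<^sup>2) + 3 * 1 - 1)
        - 2 * (exp (3 / \<sigma>\<^sup>2) * Phi (c - 3 / \<sigma>) - 3 * (exp (1 / \<sigma>\<^sup>2) * Phi (c - 2 / \<sigma>))
          + 3 * (1 * Phi (c - 1 / \<sigma>)) - 1 * Phi (c - 0 / \<sigma>)))"
    by (intro has_bochner_integral_diff has_bochner_integral_mult_right
        has_bochner_integral_lognormal_centered_cube has_bochner_integral_lognormal_centered_cube_atMost)
  moreover have "c - 3 / \<sigma> = - 5 / (2 * \<sigma>)" "c - 2 / \<sigma> = - 3 / (2 * \<sigma>)" "c - 1 / \<sigma> = - 1 / (2 * \<sigma>)"
    using assms by (simp_all add: c_def field_simps)
  moreover have "Phi (c - 0 / \<sigma>) = 1 - Phi (- 1 / (2 * \<sigma>))"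
    using Phi_minus[of c] by (simp add: c_def)
  ultimately show ?thesis
    unfolding integrand by (simp only:) (simp add: lognormal_abs_moment3_def algebra_simps)
qed

lemma lognormal_mean: "(\<integral>z. z \<partial>lognormal \<sigma>) = 1"
  using has_bochner_integral_lognormal_power[of \<sigma> 1]
  by (simp add: integral_lognormal has_bochner_integral_iff)

lemma lognormal_variance: "(\<integral>z. (z - 1)\<^sup>2 \<partial>lognormal \<sigma>) = exp (1 / \<sigma>\<^sup>2) - 1"
  using has_bochner_integral_lognormal_centered_square[of \<sigma>]
  by (simp add: integral_lognormal has_bochner_integral_iff)

lemma integrable_lognormal_abs_cube: "integrable (lognormal \<sigma>) (\<lambda>z. \<bar>z\<bar> ^ 3)"
  using has_bochner_integral_lognormal_power[of \<sigma> 3]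
  by (simp add: integrable_lognormal_iff lognormal_map_pos less_imp_le integrable.intros)

lemma integrable_lognormal_abs_centered_cube:
  "\<sigma> > 0 \<Longrightarrow> integrable (lognormal \<sigma>) (\<lambda>z. \<bar>z - 1\<bar> ^ 3)"
  using has_bochner_integral_lognormal_abs_centered_cube[of \<sigma>]
  by (simp add: integrable_lognormal_iff integrable.intros)

lemma lognormal_abs_centered_cube:
  "\<sigma> > 0 \<Longrightarrow> (\<integral>z. \<bar>z - 1\<bar> ^ 3 \<partial>lognormal \<sigma>) = lognormal_abs_moment3 \<sigma>"
  using has_bochner_integral_lognormal_abs_centered_cube[of \<sigma>]
  by (simp add: integral_lognormal has_bochner_integral_iff)

lemma integral_abs_cube_pos:
  fixes M :: "real measure"
  assumes "integrable M (\<lambda>z. \<bar>z - m\<bar> ^ 3)" and "(\<integral>z. (z - m)\<^sup>2 \<partial>M) \<noteq> 0"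
  shows "0 < (\<integral>z. \<bar>z - m\<bar> ^ 3 \<partial>M)"
proof (rule ccontr)
  assume "\<not> 0 < (\<integral>z. \<bar>z - m\<bar> ^ 3 \<partial>M)"
  moreover have "0 \<le> (\<integral>z. \<bar>z - m\<bar> ^ 3 \<partial>M)"
    by (rule Bochner_Integration.integral_nonneg) simp
  ultimately have "(\<integral>z. \<bar>z - m\<bar> ^ 3 \<partial>M) = 0"
    by linarith
  then have "AE z in M. \<bar>z - m\<bar> ^ 3 = 0"
    using integral_nonneg_eq_0_iff_AE[OF assms(1)] by simp
  then have "AE z in M. (z - m)\<^sup>2 = 0"
    by eventually_elim simp
  then have "(\<integral>z. (z - m)\<^sup>2 \<partial>M) = 0"
    by (rule integral_eq_zero_AE)
  with assms(2) show False ..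
qed

lemma lognormal_abs_moment3_pos: "\<sigma> > 0 \<Longrightarrow> 0 < lognormal_abs_moment3 \<sigma>"
  using integral_abs_cube_pos[OF integrable_lognormal_abs_centered_cube]
  by (simp add: lognormal_abs_centered_cube lognormal_variance)

section \<open>Bounds on the error term\<close>

lemma eps_BE_eq:
  "eps_BE B \<sigma> n = B * lognormal_abs_moment3 \<sigma> / (sqrt (real n) * (exp (1 / \<sigma>\<^sup>2) - 1) powr (3 / 2))"
  unfolding eps_BE_def lognormal_abs_moment3_def ..

lemma nonneg_if_eps_BE_nonneg:
  assumes "0 \<le> eps_BE B \<sigma> n" and "\<sigma> > 0" and "1 \<le> n"
  shows "0 \<le> B"
proof -
  have "0 < sqrt (real n) * (exp (1 / \<sigma>\<^sup>2) - 1) powr (3 / 2)"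
    using assms(2,3) by simp
  then show ?thesis
    using assms(1) lognormal_abs_moment3_pos[OF assms(2)]
    by (simp add: eps_BE_eq zero_le_divide_iff zero_le_mult_iff)
qed

lemma eps_BE_le:
  assumes "0 \<le> B" and "lognormal_abs_moment3 \<sigma> \<le> V"
  shows "eps_BE B \<sigma> n \<le> B * V / (sqrt (real n) * (exp (1 / \<sigma>\<^sup>2) - 1) powr (3 / 2))"
  unfolding eps_BE_eq using assms by (intro divide_right_mono mult_left_mono) auto

lemma lognormal_abs_moment3_le_exp:
  assumes "\<sigma> > 0"
  shows "lognormal_abs_moment3 \<sigma> \<le> exp (3 / \<sigma>\<^sup>2) + 4"
proof -
  have "(1 - 2 * Phi (- 5 / (2 * \<sigma>))) * exp (3 / \<sigma>\<^sup>2) \<le> exp (3 / \<sigma>\<^sup>2)"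
    using Phi_nonneg[of "- 5 / (2 * \<sigma>)"] by (simp add: mult_le_cancel_right1)
  moreover have "0 \<le> 3 * (1 - 2 * Phi (- 3 / (2 * \<sigma>))) * exp (1 / \<sigma>\<^sup>2)"
    using Phi_minus_le_half[of "3 / (2 * \<sigma>)"] assms by simp
  moreover have "1 - 2 * Phi (- 1 / (2 * \<sigma>)) \<le> 1"
    using Phi_nonneg[of "- 1 / (2 * \<sigma>)"] by simp
  ultimately show ?thesis
    unfolding lognormal_abs_moment3_def by argo
qed

lemma eps_BE_le_exp:
  assumes "0 \<le> B" and "\<sigma> > 0"
  shows "eps_BE B \<sigma> n \<le> B * (exp (3 / (2 * \<sigma>\<^sup>2)) / sqrt (real n)) *
    ((1 + 4 * exp (- 3 / \<sigma>\<^sup>2)) / (1 - exp (- 1 / \<sigma>\<^sup>2)) powr (3 / 2))"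
proof -
  define q where "q = exp (3 / (2 * \<sigma>\<^sup>2))"
  define W where "W = 1 - exp (- 1 / \<sigma>\<^sup>2)"
  have W: "0 < W" using assms by (simp add: W_def)
  have q: "0 < q" by (simp add: q_def)
  have eW: "exp (1 / \<sigma>\<^sup>2) - 1 = exp (1 / \<sigma>\<^sup>2) * W"
    by (simp add: W_def exp_minus field_simps)
  have D: "(exp (1 / \<sigma>\<^sup>2) - 1) powr (3 / 2) = q * W powr (3 / 2)"
    unfolding eW using W by (simp add: powr_mult exp_powr_real q_def)
  have q2: "exp (3 / \<sigma>\<^sup>2) = q\<^sup>2" and q2': "exp (- 3 / \<sigma>\<^sup>2) = 1 / q\<^sup>2"
    by (simp_all add: q_def exp_minus power2_eq_square exp_add[symmetric] field_simps)
  have "eps_BE B \<sigma> n \<le> B * (exp (3 / \<sigma>\<^sup>2) + 4) / (sqrt (real n) * (exp (1 / \<sigma>\<^sup>2) - 1) powr (3 / 2))"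
    by (rule eps_BE_le[OF assms(1) lognormal_abs_moment3_le_exp[OF assms(2)]])
  also have "\<dots> = B * (q / sqrt (real n)) * ((1 + 4 * (1 / q\<^sup>2)) / W powr (3 / 2))"
    unfolding D q2 using W q by (cases "n = 0") (simp_all add: field_simps power2_eq_square)
  finally show ?thesis
    unfolding q2' by (simp add: q_def W_def)
qed

lemma nonpos_if_deriv_nonpos:
  fixes f f' :: "real \<Rightarrow> real"
  assumes "f 0 \<le> 0"
    and "\<And>x. 0 \<le> x \<Longrightarrow> (f has_real_derivative f' x) (at x)"
    and "\<And>x. 0 \<le> x \<Longrightarrow> f' x \<le> 0"
    and "0 \<le> u"
  shows "f u \<le> 0"
  using DERIV_nonpos_imp_nonincreasing[of 0 u f] assms by fastforce

lemma exp_polynomial_nonpos: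
  fixes u :: real
  assumes "0 \<le> u"
  shows "(5 - 125/6 * u - 281.875 * u\<^sup>2) * exp (12 * u) - (9 - 13.5 * u + 24 * u\<^sup>2) * exp (4 * u)
    + (4 - 50/3 * u - 2951.26 * u\<^sup>2) \<le> 0"
proof -
  define f0 where "f0 = (\<lambda>u::real. (5 - 125/6 * u - 281.875 * u\<^sup>2) * exp (12 * u)
    - (9 - 13.5 * u + 24 * u\<^sup>2) * exp (4 * u) + (4 - 50/3 * u - 2951.26 * u\<^sup>2))"
  define f1 where "f1 = (\<lambda>u::real. (235/6 - 813.75 * u - 3382.5 * u\<^sup>2) * exp (12 * u)
    - (22.5 - 6 * u + 96 * u\<^sup>2) * exp (4 * u) + (- 50/3 - 5902.52 * u))"
  define f2 where "f2 = (\<lambda>u::real. (- 1375/4 - 16530 * u - 40590 * u\<^sup>2) * exp (12 * u)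
    - (84 + 168 * u + 384 * u\<^sup>2) * exp (4 * u) - 147563/25)"
  have f2_nonpos: "f2 x \<le> 0" if "0 \<le> x" for x
  proof -
    have "0 \<le> x\<^sup>2" by simp
    then have "(- 1375/4 - 16530 * x - 40590 * x\<^sup>2) * exp (12 * x) \<le> 0"
      by (intro mult_nonpos_nonneg) (use that in linarith, simp)
    moreover have "0 \<le> (84 + 168 * x + 384 * x\<^sup>2) * exp (4 * x)"
      using that by simp
    ultimately show ?thesis by (simp add: f2_def)
  qed
  have f1_nonpos: "f1 x \<le> 0" if "0 \<le> x" for x
  proof (rule nonpos_if_deriv_nonpos[of f1 f2, OF _ _ f2_nonpos that])
    show "f1 0 \<le> 0" by (simp add: f1_def)
    show "(f1 has_real_derivative f2 y) (at y)" for y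
      unfolding f1_def f2_def
      by (rule derivative_eq_intros refl | simp)+ (simp add: algebra_simps power2_eq_square)
  qed
  have "f0 u \<le> 0"
  proof (rule nonpos_if_deriv_nonpos[of f0 f1, OF _ _ f1_nonpos assms])
    show "f0 0 \<le> 0" by (simp add: f0_def)
    show "(f0 has_real_derivative f1 y) (at y)" for y
      unfolding f0_def f1_def
      by (rule derivative_eq_intros refl | simp)+ (simp add: algebra_simps power2_eq_square)
  qed
  then show ?thesis by (simp add: f0_def)
qed

(* After the Taylor bounds on 1 - 2 Phi(-x) are inserted into the numerator of eps_BE, what
   exceeds the claimed bound is a times the exponential polynomial of exp_polynomial_nonpos at
   u = a^2; its constants are chosen so that this polynomial and its derivative vanish at 0. *)
lemma Taylor_numerator_eq:
  fixes a E1 E3 :: real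
  shows "(5 * a - (5 * a) ^ 3 / 6 + (5 * a) ^ 5 / 40) * E3 - 3 * (3 * a - (3 * a) ^ 3 / 6) * E1
      + 4 * (a - a ^ 3 / 6 + a ^ 5 / 40)
    = 16 * a ^ 3 * (1 + (46.115 + 0.375 * E1 + 5.625 * E3) * (4 * a\<^sup>2))
      + a * ((5 - 125/6 * a\<^sup>2 - 281.875 * (a\<^sup>2)\<^sup>2) * E3 - (9 - 13.5 * a\<^sup>2 + 24 * (a\<^sup>2)\<^sup>2) * E1
        + (4 - 50/3 * a\<^sup>2 - 2951.26 * (a\<^sup>2)\<^sup>2))"
  by (simp add: algebra_simps power2_eq_square power3_eq_cube power4_eq_xxxx eval_nat_numeral)

lemma central_mass_combination_le:
  assumes "0 < a"
  shows "(1 - 2 * Phi (- (5 * a))) * exp (12 * a\<^sup>2) - 3 * (1 - 2 * Phi (- (3 * a))) * exp (4 * a\<^sup>2)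
      + 4 * (1 - 2 * Phi (- a))
    \<le> sqrt (2 / pi) * (16 * a ^ 3 * (1 + (46.115 + 0.375 * exp (4 * a\<^sup>2) + 5.625 * exp (12 * a\<^sup>2)) * (4 * a\<^sup>2)))"
proof -
  define k where "k = sqrt (2 / pi)"
  define E1 where "E1 = exp (4 * a\<^sup>2)"
  define E3 where "E3 = exp (12 * a\<^sup>2)"
  have "(1 - 2 * Phi (- (5 * a))) * E3 \<le> k * (5 * a - (5 * a) ^ 3 / 6 + (5 * a) ^ 5 / 40) * E3"
    using one_minus_two_Phi_minus_le[of "5 * a"] assms by (simp add: k_def E3_def)
  moreover have "k * (3 * a - (3 * a) ^ 3 / 6) * E1 \<le> (1 - 2 * Phi (- (3 * a))) * E1"
    using one_minus_two_Phi_minus_ge[of "3 * a"] assms by (simp add: k_def E1_def)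
  moreover have "1 - 2 * Phi (- a) \<le> k * (a - a ^ 3 / 6 + a ^ 5 / 40)"
    using one_minus_two_Phi_minus_le[of a] assms by (simp add: k_def)
  ultimately have "(1 - 2 * Phi (- (5 * a))) * E3 - 3 * (1 - 2 * Phi (- (3 * a))) * E1 + 4 * (1 - 2 * Phi (- a))
      \<le> k * ((5 * a - (5 * a) ^ 3 / 6 + (5 * a) ^ 5 / 40) * E3 - 3 * (3 * a - (3 * a) ^ 3 / 6) * E1
        + 4 * (a - a ^ 3 / 6 + a ^ 5 / 40))"
    by (simp add: algebra_simps)
  also have "\<dots> \<le> k * (16 * a ^ 3 * (1 + (46.115 + 0.375 * E1 + 5.625 * E3) * (4 * a\<^sup>2)))"
    unfolding Taylor_numerator_eq
    using exp_polynomial_nonpos[of "a\<^sup>2"] assms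
    by (intro mult_left_mono) (auto simp: k_def E1_def E3_def mult_nonneg_nonpos)
  finally show ?thesis
    unfolding k_def E1_def E3_def .
qed

lemma lognormal_abs_moment3_le_Taylor:
  assumes "\<sigma> > 0"
  shows "lognormal_abs_moment3 \<sigma> \<le> sqrt (8 / pi) * (1 / \<sigma>\<^sup>2) powr (3 / 2) *
    (1 + (46.115 + 0.375 * exp (1 / \<sigma>\<^sup>2) + 5.625 * exp (3 / \<sigma>\<^sup>2)) / \<sigma>\<^sup>2)"
proof -
  define a where "a = 1 / (2 * \<sigma>)"
  have a: "0 < a" using assms by (simp add: a_def)
  have "(2 * a) powr 2 = 1 / \<sigma>\<^sup>2"
    using a by (simp add: powr_numeral a_def power_divide)
  then have "(1 / \<sigma>\<^sup>2) powr (3 / 2) = ((2 * a) powr 2) powr (3 / 2)"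
    by (simp only:)
  also have "\<dots> = (2 * a) ^ 3"
    using a by (simp only: powr_powr) (simp add: powr_numeral)
  finally have powr_eq: "(1 / \<sigma>\<^sup>2) powr (3 / 2) = 8 * a ^ 3" by simp
  have sqrt_eq: "sqrt (8 / pi) = 2 * sqrt (2 / pi)"
    by (rule real_sqrt_unique) (auto simp: power_mult_distrib)
  have "4 * a\<^sup>2 = 1 / \<sigma>\<^sup>2" "12 * a\<^sup>2 = 3 / \<sigma>\<^sup>2"
    using assms by (simp_all add: a_def power2_eq_square field_simps)
  moreover have "- (5 * a) = - 5 / (2 * \<sigma>)" "- (3 * a) = - 3 / (2 * \<sigma>)" "- a = - 1 / (2 * \<sigma>)"
    by (simp_all add: a_def)
  ultimately show ?thesis
    using central_mass_combination_le[OF a]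
    unfolding lognormal_abs_moment3_def powr_eq sqrt_eq by (simp add: field_simps)
qed

lemma eps_BE_le_Taylor:
  assumes "0 \<le> B" and "\<sigma> > 0"
  shows "eps_BE B \<sigma> n \<le> B * sqrt (8 / pi) * (1 / sqrt (real n)) *
    (1 + (46.115 + 0.375 * exp (1 / \<sigma>\<^sup>2) + 5.625 * exp (3 / \<sigma>\<^sup>2)) / \<sigma>\<^sup>2)"
proof -
  define K where "K = 46.115 + 0.375 * exp (1 / \<sigma>\<^sup>2) + 5.625 * exp (3 / \<sigma>\<^sup>2)"
  define D where "D = (exp (1 / \<sigma>\<^sup>2) - 1) powr (3 / 2)"
  have D: "0 < D" using assms by (simp add: D_def)
  have "0 \<le> K" by (simp add: K_def)
  moreover have "1 / \<sigma>\<^sup>2 \<le> exp (1 / \<sigma>\<^sup>2) - 1"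
    using exp_ge_add_one_self[of "1 / \<sigma>\<^sup>2"] by linarith
  then have "(1 / \<sigma>\<^sup>2) powr (3 / 2) \<le> D"
    unfolding D_def by (intro powr_mono2) auto
  ultimately have "sqrt (8 / pi) * (1 / \<sigma>\<^sup>2) powr (3 / 2) * (1 + K / \<sigma>\<^sup>2) \<le> sqrt (8 / pi) * D * (1 + K / \<sigma>\<^sup>2)"
    by (intro mult_right_mono mult_left_mono) auto
  then have "lognormal_abs_moment3 \<sigma> \<le> sqrt (8 / pi) * D * (1 + K / \<sigma>\<^sup>2)"
    using lognormal_abs_moment3_le_Taylor[OF assms(2)] unfolding K_def by linarith
  then have "eps_BE B \<sigma> n \<le> B * (sqrt (8 / pi) * D * (1 + K / \<sigma>\<^sup>2)) / (sqrt (real n) * D)"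
    unfolding D_def by (rule eps_BE_le[OF assms(1)])
  also have "\<dots> = B * sqrt (8 / pi) * (1 / sqrt (real n)) * (1 + K / \<sigma>\<^sup>2)"
    using D by (simp add: mult.assoc mult.left_commute[of D])
  finally show ?thesis unfolding K_def .
qed

section \<open>The Berry-Esseen bound for sample means\<close>

lemma (in prob_space) distr_iid_PiM_shift:
  assumes "1 \<le> n"
    and "indep_vars (\<lambda>_. N) Y {1..n}"
    and "\<And>j. j \<in> {1..n} \<Longrightarrow> random_variable N (Y j)"
    and "\<And>j. j \<in> {1..n} \<Longrightarrow> distr M N (Y j) = \<mu>"
  shows "distr M (\<Pi>\<^sub>M i\<in>{..<n}. \<mu>) (\<lambda>\<omega>. \<lambda>i\<in>{..<n}. Y (Suc i) \<omega>) = (\<Pi>\<^sub>M i\<in>{..<n}. \<mu>)"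
proof -
  have "1 \<in> {1..n}" using assms(1) by simp
  then have \<mu>: "prob_space \<mu>" "sets \<mu> = sets N"
    using assms(3,4)[of 1] prob_space_distr by auto
  have "distr M (\<Pi>\<^sub>M i\<in>{1..n}. N) (\<lambda>\<omega>. \<lambda>i\<in>{1..n}. Y i \<omega>) = (\<Pi>\<^sub>M i\<in>{1..n}. distr M N (Y i))"
    using indep_vars_iff_distr_eq_PiM'[of "{1..n}" Y "\<lambda>_. N"] assms by auto
  also have "\<dots> = (\<Pi>\<^sub>M i\<in>{1..n}. \<mu>)"
    by (rule PiM_cong) (simp_all add: assms(4))
  finally have joint: "distr M (\<Pi>\<^sub>M i\<in>{1..n}. N) (\<lambda>\<omega>. \<lambda>i\<in>{1..n}. Y i \<omega>) = (\<Pi>\<^sub>M i\<in>{1..n}. \<mu>)" .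
  have "(\<lambda>\<omega>. \<lambda>i\<in>{..<n}. \<omega> (Suc i)) \<in> measurable (\<Pi>\<^sub>M i\<in>{1..n}. N) (\<Pi>\<^sub>M i\<in>{..<n}. N)"
    by (intro measurable_restrict measurable_component_singleton) auto
  moreover have "sets (\<Pi>\<^sub>M i\<in>{..<n}. \<mu>) = sets (\<Pi>\<^sub>M i\<in>{..<n}. N)"
    using \<mu> by (intro sets_PiM_cong) auto
  ultimately have shift_measurable:
      "(\<lambda>\<omega>. \<lambda>i\<in>{..<n}. \<omega> (Suc i)) \<in> measurable (\<Pi>\<^sub>M i\<in>{1..n}. N) (\<Pi>\<^sub>M i\<in>{..<n}. \<mu>)"
    by (simp cong: measurable_cong_sets)
  have joint_measurable: "(\<lambda>\<omega>. \<lambda>i\<in>{1..n}. Y i \<omega>) \<in> measurable M (\<Pi>\<^sub>M i\<in>{1..n}. N)"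
    using assms(3) by (intro measurable_restrict) auto
  have "distr M (\<Pi>\<^sub>M i\<in>{..<n}. \<mu>) (\<lambda>\<omega>. \<lambda>i\<in>{..<n}. Y (Suc i) \<omega>)
      = distr (distr M (\<Pi>\<^sub>M i\<in>{1..n}. N) (\<lambda>\<omega>. \<lambda>i\<in>{1..n}. Y i \<omega>)) (\<Pi>\<^sub>M i\<in>{..<n}. \<mu>)
          (\<lambda>\<omega>. \<lambda>i\<in>{..<n}. \<omega> (Suc i))"
    by (subst distr_distr[OF shift_measurable joint_measurable]) (auto intro!: distr_cong)
  also have "\<dots> = (\<Pi>\<^sub>M i\<in>{..<n}. \<mu>)"
    unfolding joint using distr_PiM_reindex[of "{1..n}" "\<lambda>_. \<mu>" Suc "{..<n}"] \<mu> by auto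
  finally show ?thesis .
qed

lemma Phi_bound_le_imp_less:
  assumes "prob_space P" and [measurable]: "Z \<in> borel_measurable P"
    and le_bound: "\<And>y. \<bar>measure P {w \<in> space P. Z w \<le> y} - Phi y\<bar> \<le> E"
  shows "\<bar>measure P {w \<in> space P. Z w < x} - Phi x\<bar> \<le> E"
proof -
  interpret prob_space P by fact
  have "measure P {w \<in> space P. Z w < x} \<le> measure P {w \<in> space P. Z w \<le> x}"
    by (intro finite_measure_mono) auto
  then have upper: "measure P {w \<in> space P. Z w < x} - Phi x \<le> E"
    using le_bound[of x] by linarith
  have "Phi x - measure P {w \<in> space P. Z w < x} \<le> E + d" if "0 < d" for d
  proof -
    have "measure P {w \<in> space P. Z w \<le> x - d} \<le> measure P {w \<in> space P. Z w < x}"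
      using that by (intro finite_measure_mono) auto
    then show ?thesis
      using le_bound[of "x - d"] Phi_diff_le[of "x - d" x] that by linarith
  qed
  then have "Phi x - measure P {w \<in> space P. Z w < x} \<le> E"
    by (rule field_le_epsilon)
  with upper show ?thesis by linarith
qed

lemma sqrt_cube_eq_powr: "0 < v \<Longrightarrow> sqrt v ^ 3 = v powr (3 / 2)"
  using powr_power[of v "1 / 2" 3] by (simp add: powr_half_sqrt)

lemma berry_esseen_const_PiM_less:
  fixes \<mu> :: "real measure"
  assumes "berry_esseen_const B"
    and "prob_space \<mu>" and "sets \<mu> = sets borel" and "integrable \<mu> (\<lambda>z. \<bar>z\<bar> ^ 3)" and "1 \<le> n"
    and "(\<integral>z. z \<partial>\<mu>) = m" and "(\<integral>z. (z - m)\<^sup>2 \<partial>\<mu>) = v" and "0 < v"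
    and "(\<integral>z. \<bar>z - m\<bar> ^ 3 \<partial>\<mu>) = r"
  defines "P \<equiv> \<Pi>\<^sub>M i\<in>{..<n}. \<mu>"
  shows "\<bar>measure P {\<omega> \<in> space P. (\<Sum>j<n. \<omega> j - m) / (sqrt v * sqrt (real n)) < x} - Phi x\<bar>
    \<le> B * r / (sqrt (real n) * v powr (3 / 2))"
proof (rule Phi_bound_le_imp_less)
  show "prob_space P"
    unfolding P_def using assms(2) by (intro prob_space_PiM) auto
  have "sets P = sets (\<Pi>\<^sub>M i\<in>{..<n}. (borel :: real measure))"
    unfolding P_def using assms(3) by (intro sets_PiM_cong) auto
  moreover have "(\<lambda>\<omega>. (\<Sum>j<n. \<omega> j - m) / (sqrt v * sqrt (real n))) \<in> borel_measurable (\<Pi>\<^sub>M i\<in>{..<n}. borel)"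
    by measurable
  ultimately show "(\<lambda>\<omega>. (\<Sum>j<n. \<omega> j - m) / (sqrt v * sqrt (real n))) \<in> borel_measurable P"
    by (simp cong: measurable_cong_sets)
  have "0 < n" using assms(5) by simp
  then show "\<bar>measure P {\<omega> \<in> space P. (\<Sum>j<n. \<omega> j - m) / (sqrt v * sqrt (real n)) \<le> y} - Phi y\<bar>
      \<le> B * r / (sqrt (real n) * v powr (3 / 2))" for y
    using assms(1) unfolding berry_esseen_const_def Let_def
    by (auto dest!: spec[of _ \<mu>] spec[of _ n] simp: assms P_def sqrt_cube_eq_powr)
qed

lemma normalized_sum_less_iff:
  fixes S m h v n :: real
  assumes "0 < v" and "0 < n"
  shows "(S - n * m) / (sqrt v * sqrt n) < (h - m) * sqrt (n / v) \<longleftrightarrow> S / n < h"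
proof -
  have "sqrt (n / v) * (sqrt v * sqrt n) = n"
    using assms by (simp add: real_sqrt_divide)
  then have scale: "(h - m) * sqrt (n / v) * (sqrt v * sqrt n) = (h - m) * n"
    by (simp add: mult.assoc)
  have "(S - n * m) / (sqrt v * sqrt n) < (h - m) * sqrt (n / v)
      \<longleftrightarrow> S - n * m < (h - m) * sqrt (n / v) * (sqrt v * sqrt n)"
    by (rule pos_divide_less_eq) (use assms in simp)
  also have "\<dots> \<longleftrightarrow> S / n < h"
    unfolding scale using assms by (simp add: pos_divide_less_eq algebra_simps)
  finally show ?thesis .
qed

lemma berry_esseen_sample_mean:
  fixes Y :: "nat \<Rightarrow> 'a \<Rightarrow> real"
  assumes "berry_esseen_const B" and "prob_space M" and "1 \<le> n"
    and "prob_space.indep_vars M (\<lambda>_. borel) Y {1..n}"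
    and "\<And>j. j \<in> {1..n} \<Longrightarrow> Y j \<in> borel_measurable M"
    and "\<And>j. j \<in> {1..n} \<Longrightarrow> distr M borel (Y j) = \<mu>"
    and "integrable \<mu> (\<lambda>z. \<bar>z\<bar> ^ 3)" and "(\<integral>z. z \<partial>\<mu>) = m"
    and "(\<integral>z. (z - m)\<^sup>2 \<partial>\<mu>) = v" and "0 < v" and "(\<integral>z. \<bar>z - m\<bar> ^ 3 \<partial>\<mu>) = r"
  shows "\<bar>measure M {\<omega> \<in> space M. (\<Sum>j=1..n. Y j \<omega>) / real n < h} - Phi ((h - m) * sqrt (real n / v))\<bar>
    \<le> B * r / (sqrt (real n) * v powr (3 / 2))"
proof -
  interpret prob_space M by fact
  define P where "P = (\<Pi>\<^sub>M i\<in>{..<n}. \<mu>)"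
  define T where "T = (\<lambda>\<omega>. \<lambda>i\<in>{..<n}. Y (Suc i) \<omega>)"
  define Z where "Z = (\<lambda>\<omega>. (\<Sum>j<n. \<omega> j - m) / (sqrt v * sqrt (real n)))"
  define x where "x = (h - m) * sqrt (real n / v)"
  have "1 \<in> {1..n}" using assms(3) by simp
  then have \<mu>: "prob_space \<mu>" "sets \<mu> = sets borel"
    using assms(5,6)[of 1] prob_space_distr by auto
  have law: "distr M P T = P"
    unfolding P_def T_def using assms(3-6) by (intro distr_iid_PiM_shift) auto
  have "T \<in> measurable M (\<Pi>\<^sub>M i\<in>{..<n}. borel)"
    unfolding T_def using assms(5) by (intro measurable_restrict) auto
  moreover have sets_P: "sets P = sets (\<Pi>\<^sub>M i\<in>{..<n}. (borel :: real measure))"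
    unfolding P_def using \<mu> by (intro sets_PiM_cong) auto
  ultimately have T: "T \<in> measurable M P"
    by (simp cong: measurable_cong_sets)
  have "Z \<in> borel_measurable (\<Pi>\<^sub>M i\<in>{..<n}. borel)"
    unfolding Z_def by measurable
  then have "Z \<in> borel_measurable P"
    using sets_P by (simp cong: measurable_cong_sets)
  then have "{w \<in> space P. Z w < x} \<in> sets P"
    by measurable
  moreover have "{\<omega> \<in> space M. (\<Sum>j=1..n. Y j \<omega>) / real n < h} = T -` {w \<in> space P. Z w < x} \<inter> space M"
  proof -
    have "Z (T \<omega>) = ((\<Sum>j=1..n. Y j \<omega>) - real n * m) / (sqrt v * sqrt (real n))" for \<omega>
      by (simp add: Z_def T_def sum_subtractf sum.atLeast1_atMost_eq)
    then show ?thesis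
      using measurable_space[OF T] assms(3,10) by (auto simp: x_def normalized_sum_less_iff)
  qed
  ultimately have "measure M {\<omega> \<in> space M. (\<Sum>j=1..n. Y j \<omega>) / real n < h} = measure P {w \<in> space P. Z w < x}"
    using measure_distr[OF T] law by simp
  then show ?thesis
    using berry_esseen_const_PiM_less[OF assms(1) \<mu> assms(7,3,8-11)]
    by (simp add: P_def Z_def x_def)
qed

lemma berry_esseen_lognormal_sample_mean:
  assumes "prob_space M" and "\<sigma> > 0" and "1 \<le> n"
    and "prob_space.indep_vars M (\<lambda>_. borel) X {1..n}"
    and "\<And>j. j \<in> {1..n} \<Longrightarrow> distributed M lborel (X j) std_normal_density"
    and "berry_esseen_const B"
  shows "\<bar>measure M {\<omega> \<in> space M. (\<Sum>j=1..n. lognormal_map \<sigma> (X j \<omega>)) / real n < h}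
      - Phi ((h - 1) * sqrt (real n / (exp (1 / \<sigma>\<^sup>2) - 1)))\<bar> \<le> eps_BE B \<sigma> n"
proof -
  interpret prob_space M by fact
  let ?Y = "\<lambda>j. lognormal_map \<sigma> \<circ> X j"
  have "\<bar>prob {\<omega> \<in> space M. (\<Sum>j=1..n. ?Y j \<omega>) / real n < h}
      - Phi ((h - 1) * sqrt (real n / (exp (1 / \<sigma>\<^sup>2) - 1)))\<bar> \<le> eps_BE B \<sigma> n"
    unfolding eps_BE_eq
  proof (rule berry_esseen_sample_mean[OF assms(6,1,3), where \<mu> = "lognormal \<sigma>"])
    show "indep_vars (\<lambda>_. borel) ?Y {1..n}"
      using assms(4) by (rule indep_vars_compose) simp
    show "?Y j \<in> borel_measurable M" if "j \<in> {1..n}" for j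
      using distributed_measurable[OF assms(5)[OF that]] by simp
    show "distr M borel (?Y j) = lognormal \<sigma>" if "j \<in> {1..n}" for j
      using assms(5)[OF that] by (rule distr_lognormal_map)
  qed (use assms(2) in \<open>auto simp: integrable_lognormal_abs_cube lognormal_mean lognormal_variance
      lognormal_abs_centered_cube\<close>)
  then show ?thesis by simp
qed

theorem mainTheorem7:
  fixes M :: "'a measure" and X :: "nat \<Rightarrow> 'a \<Rightarrow> real"
    and \<sigma> B :: real and n :: nat
  assumes "prob_space M"
    and "\<sigma> > 0" and "n \<ge> 1"
    and "prob_space.indep_vars M (\<lambda>_. borel) X {1..n}"
    and "\<And>j. j \<in> {1..n} \<Longrightarrow> distributed M lborel (X j) std_normal_density"
    and "berry_esseen_const B"
  shows "(\<forall>h::real.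
           \<bar>prob_space.prob M {\<omega> \<in> space M.
               (\<Sum>j=1..n. exp (X j \<omega> / \<sigma> - 1 / (2 * \<sigma>\<^sup>2))) / real n < h}
            - Phi ((h - 1) * sqrt (real n / (exp (1 / \<sigma>\<^sup>2) - 1)))\<bar> \<le> eps_BE B \<sigma> n)
       \<and> eps_BE B \<sigma> n \<le> B * sqrt (8 / pi) * (1 / sqrt (real n)) *
           (1 + (46.115 + 0.375 * exp (1 / \<sigma>\<^sup>2) + 5.625 * exp (3 / \<sigma>\<^sup>2)) / \<sigma>\<^sup>2)
       \<and> eps_BE B \<sigma> n \<le> B * (exp (3 / (2 * \<sigma>\<^sup>2)) / sqrt (real n)) *
           ((1 + 4 * exp (- 3 / \<sigma>\<^sup>2)) / (1 - exp (- 1 / \<sigma>\<^sup>2)) powr (3 / 2))"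
proof -
  have eps: "\<forall>h. \<bar>prob_space.prob M {\<omega> \<in> space M.
      (\<Sum>j=1..n. exp (X j \<omega> / \<sigma> - 1 / (2 * \<sigma>\<^sup>2))) / real n < h}
      - Phi ((h - 1) * sqrt (real n / (exp (1 / \<sigma>\<^sup>2) - 1)))\<bar> \<le> eps_BE B \<sigma> n"
    using berry_esseen_lognormal_sample_mean[OF assms] by (simp add: lognormal_map_def)
  then have "0 \<le> B"
    using nonneg_if_eps_BE_nonneg[OF _ assms(2,3)] abs_ge_zero order_trans by blast
  with eps show ?thesis
    using eps_BE_le_Taylor eps_BE_le_exp assms(2) by blast
qed

end
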